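(* Let $\{X_n\}_{n\ge1}$ be a sequence of independent random variables and $X$ an integrable random variable with $\mathrm{E}X<\infty$. If for all $n\ge1$ and all $s\in\overline{\mathbb{R}}$ $$\mathcal{P}\{X_n\ge s\mid X_1,\dots,X_{n-1}\}\le\mathcal{P}\{X>s\},$$ then $\limsup_{n\to\infty}\frac1n\sum_{i=1}^n X_i\le\mathrm{E}X$ almost surely. *)

theory Defs
  imports "HOL-Probability.Probability"
begin

definition gen_sigma :: "'a measure \<Rightarrow> (nat \<Rightarrow> 'a \<Rightarrow> real) \<Rightarrow> nat set \<Rightarrow> 'a measure" where
  "gen_sigma M Xs I =
     sigma (space M) (\<Union>i\<in>I. sets (vimage_algebra (space M) (Xs i) borel))"

definition cond_prob :: "'a measure \<Rightarrow> 'a measure \<Rightarrow> 'a set \<Rightarrow> 'a \<Rightarrow> real" where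
  "cond_prob M F A = real_cond_exp M F (indicator A)"

text \<open>Expectation of a real random variable in the extended reals,
  E X = E X^+ - E X^-, well defined whenever E X^+ < \<infinity>.\<close>
definition ext_expectation :: "'b measure \<Rightarrow> ('b \<Rightarrow> real) \<Rightarrow> ereal" where
  "ext_expectation N X =
     enn2ereal (\<integral>\<^sup>+ x. ennreal (max 0 (X x)) \<partial>N)
     - enn2ereal (\<integral>\<^sup>+ x. ennreal (max 0 (- X x)) \<partial>N)"

end

theory Submission
  imports Defs
begin

(*
  Integrating the conditional hypothesis turns it into the tail bound P{X_n \<ge> s} \<le> P{X > s};
  the conditioning plays no further role because the X_n are independent. Replacing X_n and X by
  max(-, c) - c reduces to nonnegative variables, for which Etemadi's proof of the strong law goes
  through with the Y_j stochastically dominated by one integrable Z instead of identically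
  distributed: the truncations min(Y_j, j) differ from Y_j only finitely often (Borel-Cantelli,
  since the sum of P{Z \<ge> j} is at most E Z); along k_m = floor(a^m) Chebyshev controls the
  centred truncated sums, because the variance series, the sum of E[min(Z, k_m)^2] / k_m, is at most
  4a/(a-1) E Z; the layer-cake formula transfers the truncated moments from Y_j to Z; and
  monotonicity of the partial sums interpolates between consecutive k_m at the cost of a factor a.
  Letting a decrease to 1 and c tend to -\<infinity> (monotone convergence of E max(X, c)) gives the bound.
*)

section \<open>Layer-cake comparison of truncated moments\<close>

lemma nn_integral_layer_cake:
  fixes Y :: "'a \<Rightarrow> real" and h :: "real \<Rightarrow> ennreal"
  assumes "sigma_finite_measure M"
    and [measurable]: "Y \<in> borel_measurable M" "h \<in> borel_measurable borel"
  shows "(\<integral>\<^sup>+\<omega>. (\<integral>\<^sup>+t. h t * indicator {0<..Y \<omega>} t \<partial>lborel) \<partial>M)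
       = (\<integral>\<^sup>+t. h t * indicator {0<..} t * emeasure M {\<omega>\<in>space M. t \<le> Y \<omega>} \<partial>lborel)"
proof -
  interpret pair_sigma_finite lborel M
    using assms(1) by (simp add: pair_sigma_finite_def lborel.sigma_finite_measure_axioms)
  have "(\<lambda>(t, \<omega>). h t * indicator {0<..Y \<omega>} t) \<in> borel_measurable (lborel \<Otimes>\<^sub>M M)"
    by (simp add: indicator_def) measurable
  then have "(\<integral>\<^sup>+\<omega>. (\<integral>\<^sup>+t. h t * indicator {0<..Y \<omega>} t \<partial>lborel) \<partial>M)
      = (\<integral>\<^sup>+t. (\<integral>\<^sup>+\<omega>. h t * indicator {0<..Y \<omega>} t \<partial>M) \<partial>lborel)"
    by (rule Fubini')
  also have "\<dots> = (\<integral>\<^sup>+t. (\<integral>\<^sup>+\<omega>. (h t * indicator {0<..} t) * indicator {\<omega>\<in>space M. t \<le> Y \<omega>} \<omega> \<partial>M) \<partial>lborel)"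
    by (intro nn_integral_cong) (auto simp: indicator_def)
  also have "\<dots> = (\<integral>\<^sup>+t. h t * indicator {0<..} t * emeasure M {\<omega>\<in>space M. t \<le> Y \<omega>} \<partial>lborel)"
    by (intro nn_integral_cong) (simp add: nn_integral_cmult_indicator)
  finally show ?thesis .
qed

lemma nn_integral_layer_cake_mono:
  fixes Y :: "'a \<Rightarrow> real" and Z :: "'b \<Rightarrow> real" and h :: "real \<Rightarrow> ennreal"
  assumes "sigma_finite_measure M" "sigma_finite_measure N"
    and [measurable]: "Y \<in> borel_measurable M" "Z \<in> borel_measurable N" "h \<in> borel_measurable borel"
    and tail_le: "\<And>t. t > 0 \<Longrightarrow> emeasure M {\<omega>\<in>space M. t \<le> Y \<omega>} \<le> emeasure N {x\<in>space N. t \<le> Z x}"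
  shows "(\<integral>\<^sup>+\<omega>. (\<integral>\<^sup>+t. h t * indicator {0<..Y \<omega>} t \<partial>lborel) \<partial>M)
       \<le> (\<integral>\<^sup>+x. (\<integral>\<^sup>+t. h t * indicator {0<..Z x} t \<partial>lborel) \<partial>N)"
  unfolding nn_integral_layer_cake[OF assms(1,3,5)] nn_integral_layer_cake[OF assms(2,4,5)]
  by (intro nn_integral_mono) (auto simp: indicator_def intro!: mult_left_mono tail_le)

lemma nn_integral_layer_min:
  fixes a y :: real
  assumes "0 \<le> a" "0 \<le> y"
  shows "(\<integral>\<^sup>+t. indicator {..a} t * indicator {0<..y} t \<partial>lborel) = ennreal (min y a)"
proof -
  have "(\<integral>\<^sup>+t. indicator {..a} t * indicator {0<..y} t \<partial>lborel) = (\<integral>\<^sup>+t. indicator {0<..min y a} t \<partial>lborel)"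
    by (intro nn_integral_cong) (auto simp: indicator_def)
  with assms show ?thesis by simp
qed

lemma nn_integral_layer_min_sq:
  fixes a y :: real
  assumes "0 \<le> a" "0 \<le> y"
  shows "(\<integral>\<^sup>+t. (ennreal (2 * t) * indicator {..a} t) * indicator {0<..y} t \<partial>lborel) = ennreal ((min y a)\<^sup>2)"
proof -
  have "(\<integral>\<^sup>+t. (ennreal (2 * t) * indicator {..a} t) * indicator {0<..y} t \<partial>lborel)
      = (\<integral>\<^sup>+t. ennreal (2 * t) * indicator {0..min y a} t \<partial>lborel)"
    by (intro nn_integral_cong) (auto simp: indicator_def)
  also have "\<dots> = ennreal ((min y a)\<^sup>2 - 0\<^sup>2)"
    using assms by (intro nn_integral_FTC_Icc) (auto intro!: derivative_eq_intros)
  finally show ?thesis by simp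
qed

context
  fixes M :: "'a measure" and N :: "'b measure" and Y :: "'a \<Rightarrow> real" and Z :: "'b \<Rightarrow> real"
  assumes sigma_finite: "sigma_finite_measure M" "sigma_finite_measure N"
    and YZ_measurable [measurable]: "Y \<in> borel_measurable M" "Z \<in> borel_measurable N"
    and nonneg: "\<And>\<omega>. \<omega> \<in> space M \<Longrightarrow> 0 \<le> Y \<omega>" "\<And>x. x \<in> space N \<Longrightarrow> 0 \<le> Z x"
    and tail_le: "\<And>t. t > 0 \<Longrightarrow> emeasure M {\<omega>\<in>space M. t \<le> Y \<omega>} \<le> emeasure N {x\<in>space N. t \<le> Z x}"
begin

lemma nn_integral_min_mono_of_tail_le:
  assumes "0 \<le> a"
  shows "(\<integral>\<^sup>+\<omega>. ennreal (min (Y \<omega>) a) \<partial>M) \<le> (\<integral>\<^sup>+x. ennreal (min (Z x) a) \<partial>N)"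
proof -
  have "(\<integral>\<^sup>+\<omega>. ennreal (min (Y \<omega>) a) \<partial>M)
      = (\<integral>\<^sup>+\<omega>. (\<integral>\<^sup>+t. indicator {..a} t * indicator {0<..Y \<omega>} t \<partial>lborel) \<partial>M)"
    using nonneg assms by (intro nn_integral_cong) (simp add: nn_integral_layer_min)
  also have "\<dots> \<le> (\<integral>\<^sup>+x. (\<integral>\<^sup>+t. indicator {..a} t * indicator {0<..Z x} t \<partial>lborel) \<partial>N)"
    by (rule nn_integral_layer_cake_mono) (use sigma_finite tail_le in auto)
  also have "\<dots> = (\<integral>\<^sup>+x. ennreal (min (Z x) a) \<partial>N)"
    using nonneg assms by (intro nn_integral_cong) (simp add: nn_integral_layer_min)
  finally show ?thesis .
qed

lemma nn_integral_min_sq_mono_of_tail_le: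
  assumes "0 \<le> a"
  shows "(\<integral>\<^sup>+\<omega>. ennreal ((min (Y \<omega>) a)\<^sup>2) \<partial>M) \<le> (\<integral>\<^sup>+x. ennreal ((min (Z x) a)\<^sup>2) \<partial>N)"
proof -
  have "(\<integral>\<^sup>+\<omega>. ennreal ((min (Y \<omega>) a)\<^sup>2) \<partial>M)
      = (\<integral>\<^sup>+\<omega>. (\<integral>\<^sup>+t. (ennreal (2 * t) * indicator {..a} t) * indicator {0<..Y \<omega>} t \<partial>lborel) \<partial>M)"
    using nonneg assms by (intro nn_integral_cong) (simp add: nn_integral_layer_min_sq)
  also have "\<dots> \<le> (\<integral>\<^sup>+x. (\<integral>\<^sup>+t. (ennreal (2 * t) * indicator {..a} t) * indicator {0<..Z x} t \<partial>lborel) \<partial>N)"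
    by (rule nn_integral_layer_cake_mono) (use sigma_finite tail_le in auto)
  also have "\<dots> = (\<integral>\<^sup>+x. ennreal ((min (Z x) a)\<^sup>2) \<partial>N)"
    using nonneg assms by (intro nn_integral_cong) (simp add: nn_integral_layer_min_sq)
  finally show ?thesis .
qed

end

section \<open>Geometric blocks\<close>

lemma sum_power_le_of_le:
  fixes a z :: real
  assumes "a > 1" "finite S" "\<And>m. m \<in> S \<Longrightarrow> a ^ m \<le> z" "z \<ge> 0"
  shows "(\<Sum>m\<in>S. a ^ m) \<le> a * z / (a - 1)"
proof (cases "S = {}")
  case True
  with assms show ?thesis by simp
next
  case False
  define K where "K = Max S"
  have K: "K \<in> S" "S \<subseteq> {..K}"
    using False assms(2) by (auto simp: K_def)
  have "(\<Sum>m\<in>S. a ^ m) \<le> (\<Sum>m<Suc K. a ^ m)"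
    using K assms(1) by (intro sum_mono2) auto
  also have "\<dots> = (a ^ Suc K - 1) / (a - 1)"
    using assms(1) by (intro geometric_sum) auto
  also have "\<dots> \<le> a ^ Suc K / (a - 1)"
    using assms(1) by (simp add: divide_right_mono)
  also have "\<dots> \<le> a * z / (a - 1)"
    using assms(1) assms(3)[OF K(1)] by (intro divide_right_mono) auto
  finally show ?thesis .
qed

lemma sum_sq_div_power_le_of_gt:
  fixes a z :: real
  assumes "a > 1" "finite S" "\<And>m. m \<in> S \<Longrightarrow> a ^ m > z" "z \<ge> 0"
  shows "(\<Sum>m\<in>S. z\<^sup>2 / a ^ m) \<le> a * z / (a - 1)"
proof (cases "S = {}")
  case True
  with assms show ?thesis by simp
next
  case False
  define K where "K = Min S"
  define n where "n = Suc (Max S)"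
  have K: "K \<in> S" "S \<subseteq> {K..<n}"
    using False assms(2) by (auto simp: K_def n_def less_Suc_eq_le)
  have "(\<Sum>m\<in>S. z\<^sup>2 / a ^ m) = (\<Sum>m\<in>S. z\<^sup>2 * (1 / a) ^ m)"
    by (simp add: power_one_over)
  also have "\<dots> \<le> (\<Sum>m\<in>{K..<n}. z\<^sup>2 * (1 / a) ^ m)"
    using K assms(1) by (intro sum_mono2) auto
  also have "\<dots> = z\<^sup>2 * (1 / a) ^ K * (\<Sum>i<n - K. (1 / a) ^ i)"
  proof -
    have "(\<Sum>m\<in>{K..<n}. (1 / a) ^ m) = (\<Sum>i<n - K. (1 / a) ^ (K + i))"
      using K by (intro sum.reindex_bij_witness[where j="\<lambda>m. m - K" and i="\<lambda>i. K + i"]) auto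
    then show ?thesis
      by (simp add: power_add sum_distrib_left[symmetric] mult.assoc)
  qed
  also have "\<dots> \<le> z\<^sup>2 * (1 / a) ^ K * (a / (a - 1))"
  proof (rule mult_left_mono)
    have "0 \<le> (1 / a) ^ (n - K)"
      using assms(1) by simp
    then show "(\<Sum>i<n - K. (1 / a) ^ i) \<le> a / (a - 1)"
      using assms(1) by (subst geometric_sum) (auto simp: field_simps)
  qed (use assms(1) in simp)
  also have "\<dots> = z * (z / a ^ K) * (a / (a - 1))"
    by (simp add: power2_eq_square power_one_over)
  also have "\<dots> \<le> z * 1 * (a / (a - 1))"
    using assms(1,4) assms(3)[OF K(1)] by (intro mult_right_mono mult_left_mono) auto
  finally show ?thesis
    by (simp add: mult.commute)
qed

definition geom_floor :: "real \<Rightarrow> nat \<Rightarrow> nat" where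
  "geom_floor a m = nat \<lfloor>a ^ m\<rfloor>"

lemma geom_floor_bounds:
  assumes "a > 1"
  shows "1 \<le> geom_floor a m" "real (geom_floor a m) \<le> a ^ m" "a ^ m \<le> 2 * real (geom_floor a m)"
proof -
  have pos: "1 \<le> a ^ m"
    using assms by simp
  then show "1 \<le> geom_floor a m" "real (geom_floor a m) \<le> a ^ m"
    by (simp_all add: geom_floor_def le_nat_floor)
  have "a ^ m < real_of_int \<lfloor>a ^ m\<rfloor> + 1"
    by linarith
  moreover have "1 \<le> real_of_int \<lfloor>a ^ m\<rfloor>" "real (geom_floor a m) = real_of_int \<lfloor>a ^ m\<rfloor>"
    using pos by (simp_all add: geom_floor_def)
  ultimately show "a ^ m \<le> 2 * real (geom_floor a m)"
    by linarith
qed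

lemma geom_floor_ge_of_less:
  assumes "real n < a ^ m"
  shows "n \<le> geom_floor a m"
proof -
  have "int n \<le> \<lfloor>a ^ m\<rfloor>"
    using assms by (subst le_floor_iff) simp
  then show ?thesis
    unfolding geom_floor_def by linarith
qed

lemma truncated_sq_div_geom_floor_le:
  assumes "a > 1" "z \<ge> 0"
  shows "(min z (real (geom_floor a m)))\<^sup>2 / real (geom_floor a m)
    \<le> 2 * (if a ^ m \<le> z then a ^ m else 0) + 2 * (if a ^ m > z then z\<^sup>2 / a ^ m else 0)"
proof -
  define k where "k = real (geom_floor a m)"
  note bounds = geom_floor_bounds[OF assms(1), of m, folded k_def]
  have k_pos: "0 < k"
    using bounds(1) by (simp add: k_def)
  show ?thesis
  proof (cases "a ^ m \<le> z")
    case True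
    have "(min z k)\<^sup>2 / k \<le> k\<^sup>2 / k"
      using bounds assms(2) by (intro divide_right_mono power_mono) (auto simp: k_def)
    with True bounds show ?thesis
      by (simp add: k_def power2_eq_square)
  next
    case False
    have "(min z k)\<^sup>2 / k \<le> z\<^sup>2 / k"
      using bounds assms(2) by (intro divide_right_mono) (auto simp: min_def intro: power_mono)
    also have "z\<^sup>2 / k \<le> 2 * (z\<^sup>2 / a ^ m)"
    proof -
      have "a ^ m * z\<^sup>2 \<le> (2 * k) * z\<^sup>2"
        using bounds by (intro mult_right_mono) auto
      moreover have "0 < a ^ m"
        using assms(1) by simp
      ultimately show ?thesis
        using k_pos by (simp add: field_simps)
    qed
    finally show ?thesis
      using False by (simp add: k_def)
  qed
qed

lemma sum_truncated_sq_div_geom_floor_le: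
  assumes "a > 1" "z \<ge> 0"
  shows "(\<Sum>m<n. (min z (real (geom_floor a m)))\<^sup>2 / real (geom_floor a m)) \<le> 4 * a * z / (a - 1)"
proof -
  have "(\<Sum>m<n. (min z (real (geom_floor a m)))\<^sup>2 / real (geom_floor a m))
     \<le> (\<Sum>m<n. 2 * (if a ^ m \<le> z then a ^ m else 0) + 2 * (if a ^ m > z then z\<^sup>2 / a ^ m else 0))"
    using truncated_sq_div_geom_floor_le[OF assms] by (intro sum_mono) auto
  also have "\<dots> = 2 * (\<Sum>m\<in>{m\<in>{..<n}. a ^ m \<le> z}. a ^ m) + 2 * (\<Sum>m\<in>{m\<in>{..<n}. a ^ m > z}. z\<^sup>2 / a ^ m)"
    by (simp add: sum.distrib sum_distrib_left[symmetric] sum.inter_filter[symmetric])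
  also have "\<dots> \<le> 2 * (a * z / (a - 1)) + 2 * (a * z / (a - 1))"
    using assms by (intro add_mono mult_left_mono sum_power_le_of_le sum_sq_div_power_le_of_gt) auto
  finally show ?thesis
    by simp
qed

lemma power_bracket:
  fixes a x :: real
  assumes "a > 1" "1 \<le> x"
  obtains m where "a ^ m \<le> x" "x < a ^ Suc m"
proof -
  define m where "m = (LEAST m. x < a ^ Suc m)"
  obtain K where "x < a ^ K"
    using real_arch_pow[OF assms(1)] by blast
  moreover have "a ^ K < a ^ Suc K"
    using assms(1) by simp
  ultimately have "x < a ^ Suc K"
    by linarith
  then have "x < a ^ Suc m"
    unfolding m_def by (rule LeastI)
  moreover have "a ^ m \<le> x"
  proof (cases m)
    case 0
    with assms show ?thesis by simp
  next
    case (Suc m')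
    then have "\<not> x < a ^ Suc m'"
      using not_less_Least[of m' "\<lambda>m. x < a ^ Suc m"] by (simp add: m_def)
    with Suc show ?thesis by simp
  qed
  ultimately show ?thesis
    using that by blast
qed

lemma eventually_sum_le_of_geom_floor:
  fixes T :: "nat \<Rightarrow> real"
  assumes a: "a > 1" and e: "e \<ge> 0" and T_nonneg: "\<And>j. 1 \<le> j \<Longrightarrow> 0 \<le> T j"
    and geom: "eventually (\<lambda>m. (\<Sum>j=1..geom_floor a m. T j) \<le> real (geom_floor a m) * e) sequentially"
  shows "eventually (\<lambda>n. (\<Sum>j=1..n. T j) \<le> a * e * real n) sequentially"
proof -
  obtain m0 where m0: "\<And>m. m \<ge> m0 \<Longrightarrow> (\<Sum>j=1..geom_floor a m. T j) \<le> real (geom_floor a m) * e"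
    using geom by (auto simp: eventually_sequentially)
  obtain n0 :: nat where n0: "a ^ m0 \<le> real n0"
    using real_nat_ceiling_ge by blast
  show ?thesis
    unfolding eventually_sequentially
  proof (intro exI allI impI)
    fix n assume n: "max n0 1 \<le> n"
    then have "1 \<le> real n"
      by simp
    then obtain m where m: "a ^ m \<le> real n" "real n < a ^ Suc m"
      by (rule power_bracket[OF a])
    have "m0 < Suc m"
    proof (rule ccontr)
      assume "\<not> m0 < Suc m"
      then have "a ^ Suc m \<le> a ^ m0"
        using a by (intro power_increasing) auto
      with m n0 n show False
        by linarith
    qed
    have "(\<Sum>j=1..n. T j) \<le> (\<Sum>j=1..geom_floor a (Suc m). T j)"
      using geom_floor_ge_of_less[OF m(2)] T_nonneg by (intro sum_mono2) auto
    also have "\<dots> \<le> real (geom_floor a (Suc m)) * e"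
      using m0 \<open>m0 < Suc m\<close> by simp
    also have "\<dots> \<le> a * a ^ m * e"
      using geom_floor_bounds(2)[OF a, of "Suc m"] e by (intro mult_right_mono) auto
    also have "\<dots> \<le> a * e * real n"
      using a e m(1) mult_left_mono[OF m(1), of "a * e"] by (simp add: algebra_simps)
    finally show "(\<Sum>j=1..n. T j) \<le> a * e * real n" .
  qed
qed

lemma eventually_average_le_of_eventually_eq:
  fixes T Y :: "nat \<Rightarrow> real"
  assumes sum_le: "eventually (\<lambda>n. (\<Sum>j=1..n. T j) \<le> b * real n) sequentially"
    and eq: "eventually (\<lambda>j. Y j = T j) sequentially"
    and d: "d > 0"
  shows "eventually (\<lambda>n. (\<Sum>j=1..n. Y j) / real n \<le> b + d) sequentially"
proof -
  obtain J where J: "\<And>j. j \<ge> J \<Longrightarrow> Y j = T j"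
    using eq by (auto simp: eventually_sequentially)
  define D where "D = (\<Sum>j=1..J. Y j - T j)"
  obtain n0 :: nat where n0: "\<bar>D\<bar> / d \<le> real n0"
    using real_nat_ceiling_ge by blast
  have "eventually (\<lambda>n. (\<Sum>j=1..n. Y j - T j) = D \<and> \<bar>D\<bar> \<le> d * real n \<and> 1 \<le> n) sequentially"
    unfolding eventually_sequentially
  proof (intro exI allI impI conjI)
    fix n assume n: "max (max J 1) n0 \<le> n"
    have "{1..n} = {1..J} \<union> {Suc J..n}"
      using n by auto
    then have "(\<Sum>j=1..n. Y j - T j) = D + (\<Sum>j=Suc J..n. Y j - T j)"
      by (simp add: D_def sum.union_disjoint)
    then show "(\<Sum>j=1..n. Y j - T j) = D"
      using J by simp
    have "\<bar>D\<bar> \<le> d * real n0"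
      using n0 d by (simp add: divide_le_eq mult.commute)
    also have "\<dots> \<le> d * real n"
      using n d by (intro mult_left_mono) auto
    finally show "\<bar>D\<bar> \<le> d * real n" .
    show "1 \<le> n"
      using n by simp
  qed
  with sum_le show ?thesis
  proof eventually_elim
    case (elim n)
    then have "(\<Sum>j=1..n. Y j) \<le> (b + d) * real n"
      by (simp add: sum_subtractf ring_distribs) (use abs_ge_self[of D] in linarith)
    with elim show ?case
      by (simp add: divide_le_eq)
  qed
qed

section \<open>Chebyshev and Borel-Cantelli estimates\<close>

lemma (in prob_space) indep_vars_expectation_sum_sq:
  fixes X :: "'i \<Rightarrow> 'a \<Rightarrow> real"
  assumes indep: "indep_vars (\<lambda>_. borel) X I" and J: "finite J" "J \<subseteq> I"
    and sq_int: "\<And>j. j \<in> J \<Longrightarrow> integrable M (\<lambda>\<omega>. (X j \<omega>)\<^sup>2)"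
    and centered: "\<And>j. j \<in> J \<Longrightarrow> expectation (X j) = 0"
  shows "integrable M (\<lambda>\<omega>. (\<Sum>j\<in>J. X j \<omega>)\<^sup>2)"
    and "expectation (\<lambda>\<omega>. (\<Sum>j\<in>J. X j \<omega>)\<^sup>2) = (\<Sum>j\<in>J. expectation (\<lambda>\<omega>. (X j \<omega>)\<^sup>2))"
proof -
  have int: "integrable M (X j)" if "j \<in> J" for j
    using indep J that
    by (intro square_integrable_imp_integrable[OF _ sq_int[OF that]]) (auto simp: indep_vars_def)
  have products: "integrable M (\<lambda>\<omega>. X i \<omega> * X j \<omega>) \<and>
      expectation (\<lambda>\<omega>. X i \<omega> * X j \<omega>) = (if i = j then expectation (\<lambda>\<omega>. (X j \<omega>)\<^sup>2) else 0)"
    if "i \<in> J" "j \<in> J" for i j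
  proof (cases "i = j")
    case True
    with sq_int that show ?thesis
      by (simp add: power2_eq_square)
  next
    case False
    have pair_indep: "indep_vars (\<lambda>_. borel) X {i, j}"
      using J(2) that by (intro indep_vars_subset[OF indep]) auto
    have pair_int: "\<And>k. k \<in> {i, j} \<Longrightarrow> integrable M (X k)"
      using int that by blast
    have "integrable M (\<lambda>\<omega>. \<Prod>k\<in>{i, j}. X k \<omega>)"
      by (rule indep_vars_integrable[OF _ pair_indep pair_int]) simp
    moreover have "expectation (\<lambda>\<omega>. \<Prod>k\<in>{i, j}. X k \<omega>) = (\<Prod>k\<in>{i, j}. expectation (X k))"
      by (rule indep_vars_lebesgue_integral[OF _ pair_indep pair_int]) simp
    ultimately show ?thesis
      using False centered that by simp
  qed
  have sq_sum: "(\<lambda>\<omega>. (\<Sum>j\<in>J. X j \<omega>)\<^sup>2) = (\<lambda>\<omega>. \<Sum>i\<in>J. \<Sum>j\<in>J. X i \<omega> * X j \<omega>)"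
    by (simp add: power2_eq_square sum_product)
  show "integrable M (\<lambda>\<omega>. (\<Sum>j\<in>J. X j \<omega>)\<^sup>2)"
    unfolding sq_sum using products by (intro Bochner_Integration.integrable_sum) auto
  have "expectation (\<lambda>\<omega>. (\<Sum>j\<in>J. X j \<omega>)\<^sup>2) = (\<Sum>i\<in>J. \<Sum>j\<in>J. expectation (\<lambda>\<omega>. X i \<omega> * X j \<omega>))"
    unfolding sq_sum using products by (simp add: Bochner_Integration.integral_sum)
  also have "\<dots> = (\<Sum>i\<in>J. \<Sum>j\<in>J. if i = j then expectation (\<lambda>\<omega>. (X j \<omega>)\<^sup>2) else 0)"
    using products by (intro sum.cong) auto
  finally show "expectation (\<lambda>\<omega>. (\<Sum>j\<in>J. X j \<omega>)\<^sup>2) = (\<Sum>j\<in>J. expectation (\<lambda>\<omega>. (X j \<omega>)\<^sup>2))"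
    using J(1) by (simp add: sum.delta)
qed

lemma (in prob_space) indep_vars_Chebyshev_sum:
  fixes X :: "'i \<Rightarrow> 'a \<Rightarrow> real"
  assumes indep: "indep_vars (\<lambda>_. borel) X I" and J: "finite J" "J \<subseteq> I"
    and sq_int: "\<And>j. j \<in> J \<Longrightarrow> integrable M (\<lambda>\<omega>. (X j \<omega>)\<^sup>2)"
    and a: "a > 0"
  shows "prob {\<omega>\<in>space M. a \<le> (\<Sum>j\<in>J. X j \<omega> - expectation (X j))}
    \<le> (\<Sum>j\<in>J. expectation (\<lambda>\<omega>. (X j \<omega>)\<^sup>2)) / a\<^sup>2"
proof -
  define C where "C = (\<lambda>j \<omega>. X j \<omega> - expectation (X j))"
  have X_measurable [measurable]: "X j \<in> borel_measurable M" if "j \<in> J" for j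
    using indep J that by (auto simp: indep_vars_def)
  have int: "integrable M (X j)" if "j \<in> J" for j
    using that by (intro square_integrable_imp_integrable[OF _ sq_int[OF that]]) auto
  have C_indep: "indep_vars (\<lambda>_. borel) C J"
    unfolding C_def using indep_vars_subset[OF indep J(2)]
    by (rule indep_vars_compose2[where Y="\<lambda>j x. x - expectation (X j)"]) simp
  have C_sq_int: "integrable M (\<lambda>\<omega>. (C j \<omega>)\<^sup>2)" if "j \<in> J" for j
    using int[OF that] sq_int[OF that]
    by (simp add: C_def power2_diff Bochner_Integration.integrable_diff)
  have C_centered: "expectation (C j) = 0" if "j \<in> J" for j
    using int[OF that] by (simp add: C_def prob_space)
  have C_sq_le: "expectation (\<lambda>\<omega>. (C j \<omega>)\<^sup>2) \<le> expectation (\<lambda>\<omega>. (X j \<omega>)\<^sup>2)" if "j \<in> J" for j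
    using variance_eq[OF int[OF that] sq_int[OF that]] by (simp add: C_def)
  define S where "S = (\<lambda>\<omega>. \<Sum>j\<in>J. C j \<omega>)"
  have "expectation S = (\<Sum>j\<in>J. expectation (C j))"
    unfolding S_def by (rule Bochner_Integration.integral_sum) (simp add: C_def int)
  with C_centered have S_mean: "expectation S = 0"
    by simp
  have "prob {\<omega>\<in>space M. a \<le> S \<omega>} \<le> prob {\<omega>\<in>space M. a \<le> \<bar>S \<omega> - expectation S\<bar>}"
    using S_mean by (intro finite_measure_mono) (auto simp: S_def C_def)
  also have "\<dots> \<le> variance S / a\<^sup>2"
    using indep_vars_expectation_sum_sq(1)[OF C_indep J(1) subset_refl C_sq_int C_centered] a
    by (intro Chebyshev_inequality) (auto simp: S_def C_def)
  also have "variance S = (\<Sum>j\<in>J. expectation (\<lambda>\<omega>. (C j \<omega>)\<^sup>2))"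
    using indep_vars_expectation_sum_sq(2)[OF C_indep J(1) subset_refl C_sq_int C_centered] S_mean
    by (simp add: S_def)
  also have "\<dots> / a\<^sup>2 \<le> (\<Sum>j\<in>J. expectation (\<lambda>\<omega>. (X j \<omega>)\<^sup>2)) / a\<^sup>2"
    using C_sq_le by (intro divide_right_mono sum_mono) auto
  finally show ?thesis
    by (simp add: S_def C_def)
qed

lemma (in finite_measure) summable_measure_ge_Suc:
  fixes Z :: "'a \<Rightarrow> real"
  assumes [measurable]: "Z \<in> borel_measurable M"
    and nonneg: "\<And>x. x \<in> space M \<Longrightarrow> 0 \<le> Z x" and int: "integrable M Z"
  shows "summable (\<lambda>n. measure M {x\<in>space M. real (Suc n) \<le> Z x})"
proof (rule summable_suminf_not_top)
  have "(\<lambda>x. nat \<lfloor>Z x\<rfloor>) \<in> measurable M (count_space UNIV)"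
    by measurable
  then have "(\<Sum>n. emeasure M {x\<in>space M. n < nat \<lfloor>Z x\<rfloor>}) = (\<integral>\<^sup>+x. of_nat (nat \<lfloor>Z x\<rfloor>) \<partial>M)"
    by (rule nn_integral_nat_function[symmetric])
  also have "\<dots> \<le> (\<integral>\<^sup>+x. ennreal (Z x) \<partial>M)"
    using nonneg by (intro nn_integral_mono) (auto simp: ennreal_of_nat_eq_real_of_nat intro!: ennreal_leI)
  also have "\<dots> = ennreal (\<integral>x. Z x \<partial>M)"
    using int nonneg by (intro nn_integral_eq_integral) auto
  also have "\<dots> < top"
    by simp
  finally have "(\<Sum>n. emeasure M {x\<in>space M. n < nat \<lfloor>Z x\<rfloor>}) \<noteq> top"
    by simp
  moreover have "{x\<in>space M. n < nat \<lfloor>Z x\<rfloor>} = {x\<in>space M. real (Suc n) \<le> Z x}" for n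
    by (auto simp: le_floor_iff less_floor_iff) linarith+
  ultimately show "(\<Sum>n. ennreal (measure M {x\<in>space M. real (Suc n) \<le> Z x})) \<noteq> top"
    by (simp add: emeasure_eq_measure)
qed simp

section \<open>Conditional probabilities and extended expectations\<close>

lemma subalgebra_gen_sigma:
  assumes "\<And>i. i \<in> I \<Longrightarrow> Xs i \<in> borel_measurable M"
  shows "subalgebra M (gen_sigma M Xs I)"
proof -
  define G where "G = (\<Union>i\<in>I. sets (vimage_algebra (space M) (Xs i) borel))"
  have G_sets: "G \<subseteq> sets M"
  proof
    fix B assume "B \<in> G"
    then obtain i where i: "i \<in> I" "B \<in> sets (vimage_algebra (space M) (Xs i) borel)"
      by (auto simp: G_def)
    then obtain A where "A \<in> sets borel" "B = Xs i -` A \<inter> space M"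
      by (auto simp: sets_vimage_algebra2)
    then show "B \<in> sets M"
      using assms[OF i(1)] by (auto intro: measurable_sets)
  qed
  then have "G \<subseteq> Pow (space M)"
    using sets.sets_into_space by blast
  with G_sets show ?thesis
    unfolding subalgebra_def gen_sigma_def G_def[symmetric]
    by (simp add: space_measure_of_conv sets_measure_of sets.sigma_sets_subset)
qed

lemma measure_le_of_cond_prob_le:
  assumes "prob_space M" "subalgebra M F" and E [measurable]: "E \<in> sets M"
    and le: "AE \<omega> in M. cond_prob M F E \<omega> \<le> p"
  shows "measure M E \<le> p"
proof -
  interpret prob_space M by fact
  interpret finite_measure_subalgebra M F
    by unfold_locales (use assms(2) in auto)
  have int: "integrable M (indicator E :: 'a \<Rightarrow> real)"
    by (simp add: emeasure_eq_measure)
  have "measure M E = (\<integral>\<omega>. real_cond_exp M F (indicator E) \<omega> \<partial>M)"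
    using real_cond_exp_int(2)[OF int] by simp
  also have "\<dots> \<le> (\<integral>\<omega>. p \<partial>M)"
    using le real_cond_exp_int(1)[OF int] by (intro integral_mono_AE) (auto simp: cond_prob_def)
  also have "\<dots> = p"
    by (simp add: prob_space)
  finally show ?thesis .
qed

lemma (in finite_measure) integrable_max_const:
  fixes X :: "'a \<Rightarrow> real"
  assumes [measurable]: "X \<in> borel_measurable M"
    and pos: "(\<integral>\<^sup>+ x. ennreal (max 0 (X x)) \<partial>M) < \<infinity>"
  shows "integrable M (\<lambda>x. max (X x) c)"
proof (rule Bochner_Integration.integrable_bound)
  have "integrable M (\<lambda>x. max 0 (X x))"
    using pos by (intro integrableI_bounded) auto
  then show "integrable M (\<lambda>x. max 0 (X x) + \<bar>c\<bar>)"
    by (rule Bochner_Integration.integrable_add) simp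
qed auto

lemma nn_integral_min_tendsto:
  fixes f :: "'a \<Rightarrow> real"
  assumes [measurable]: "f \<in> borel_measurable M"
  shows "(\<lambda>k::nat. \<integral>\<^sup>+x. ennreal (min (f x) (real k)) \<partial>M) \<longlonglongrightarrow> (\<integral>\<^sup>+x. ennreal (f x) \<partial>M)"
proof -
  have inc: "incseq (\<lambda>k x. ennreal (min (f x) (real k)))"
    by (auto simp: incseq_def le_fun_def intro!: ennreal_leI)
  then have "incseq (\<lambda>k. \<integral>\<^sup>+x. ennreal (min (f x) (real k)) \<partial>M)"
    by (auto simp: incseq_def le_fun_def intro!: nn_integral_mono)
  then have "(\<lambda>k. \<integral>\<^sup>+x. ennreal (min (f x) (real k)) \<partial>M)
      \<longlonglongrightarrow> (SUP k. \<integral>\<^sup>+x. ennreal (min (f x) (real k)) \<partial>M)"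
    by (rule LIMSEQ_SUP)
  moreover have "(SUP k. \<integral>\<^sup>+x. ennreal (min (f x) (real k)) \<partial>M)
      = (\<integral>\<^sup>+x. (SUP k. ennreal (min (f x) (real k))) \<partial>M)"
    using nn_integral_monotone_convergence_SUP[OF inc] by (simp add: image_comp)
  moreover have "(\<lambda>x. SUP k. ennreal (min (f x) (real k))) = (\<lambda>x. ennreal (f x))"
  proof
    fix x
    obtain n :: nat where "f x \<le> real n"
      using real_arch_simple by blast
    then have "ennreal (f x) \<le> (SUP k. ennreal (min (f x) (real k)))"
      by (intro SUP_upper2[of n]) auto
    then show "(SUP k. ennreal (min (f x) (real k))) = ennreal (f x)"
      by (intro antisym SUP_least ennreal_leI) auto
  qed
  ultimately show ?thesis
    by simp
qed

lemma (in prob_space) tendsto_integral_max_ext_expectation: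
  fixes X :: "'a \<Rightarrow> real"
  assumes [measurable]: "X \<in> borel_measurable M"
    and pos: "(\<integral>\<^sup>+ x. ennreal (max 0 (X x)) \<partial>M) < \<infinity>"
  shows "(\<lambda>k::nat. ereal (\<integral>x. max (X x) (- real k) \<partial>M)) \<longlonglongrightarrow> ext_expectation M X"
proof -
  define P where "P = (\<integral>\<^sup>+ x. ennreal (max 0 (X x)) \<partial>M)"
  define Q where "Q k = (\<integral>\<^sup>+ x. ennreal (min (max 0 (- X x)) (real k)) \<partial>M)" for k :: nat
  have enn2ereal_eq: "enn2ereal e = ereal (enn2real e)" if "e \<noteq> top" for e
    using that by (metis enn2ereal_ennreal ennreal_enn2real_if enn2real_nonneg)
  have int_pos: "integrable M (\<lambda>x. max 0 (X x))"
    using pos by (intro integrableI_bounded) auto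
  have int_neg: "integrable M (\<lambda>x. min (max 0 (- X x)) (real k))" for k :: nat
    by (intro integrable_const_bound[where B="real k"]) auto
  have integral_eq: "ereal (\<integral>x. max (X x) (- real k) \<partial>M) = enn2ereal P - enn2ereal (Q k)" for k :: nat
  proof -
    have "(\<lambda>x. max (X x) (- real k)) = (\<lambda>x. max 0 (X x) - min (max 0 (- X x)) (real k))"
      by (auto simp: fun_eq_iff max_def min_def)
    then have "(\<integral>x. max (X x) (- real k) \<partial>M)
        = (\<integral>x. max 0 (X x) \<partial>M) - (\<integral>x. min (max 0 (- X x)) (real k) \<partial>M)"
      using int_pos int_neg by simp
    also have "\<dots> = enn2real P - enn2real (Q k)"
      unfolding P_def Q_def using int_pos int_neg by (simp add: integral_eq_nn_integral)
    finally show ?thesis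
      using pos int_neg[of k] by (simp add: P_def Q_def enn2ereal_eq nn_integral_eq_integral)
  qed
  have "(\<lambda>k. enn2ereal P - enn2ereal (Q k))
      \<longlonglongrightarrow> enn2ereal P - enn2ereal (\<integral>\<^sup>+ x. ennreal (max 0 (- X x)) \<partial>M)"
  proof (intro tendsto_diff_ereal_general tendsto_enn2erealI)
    show "Q \<longlonglongrightarrow> (\<integral>\<^sup>+ x. ennreal (max 0 (- X x)) \<partial>M)"
      unfolding Q_def by (rule nn_integral_min_tendsto) simp
  qed (use pos enn2ereal_nonneg[of P] in \<open>auto simp: P_def\<close>)
  then show ?thesis
    unfolding integral_eq ext_expectation_def P_def .
qed

section \<open>Independent sequences dominated by an integrable variable\<close>

locale dominated_indep_seq = M: prob_space M + N: prob_space N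
  for M :: "'a measure" and N :: "'b measure" +
  fixes Y :: "nat \<Rightarrow> 'a \<Rightarrow> real" and Z :: "'b \<Rightarrow> real"
  assumes indep: "M.indep_vars (\<lambda>_. borel) Y {1..}"
    and Y_nonneg: "\<And>j \<omega>. 1 \<le> j \<Longrightarrow> \<omega> \<in> space M \<Longrightarrow> 0 \<le> Y j \<omega>"
    and Z_measurable [measurable]: "Z \<in> borel_measurable N"
    and Z_nonneg: "\<And>x. x \<in> space N \<Longrightarrow> 0 \<le> Z x"
    and Z_integrable: "integrable N Z"
    and tail_le: "\<And>j t. 1 \<le> j \<Longrightarrow> 0 < t \<Longrightarrow>
      emeasure M {\<omega>\<in>space M. t \<le> Y j \<omega>} \<le> emeasure N {x\<in>space N. t \<le> Z x}"
begin

lemma Y_measurable [measurable]: "1 \<le> j \<Longrightarrow> Y j \<in> borel_measurable M"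
  using indep unfolding M.indep_vars_def by auto

definition trunc :: "nat \<Rightarrow> 'a \<Rightarrow> real" where
  "trunc j \<omega> = min (Y j \<omega>) (real j)"

lemma trunc_measurable [measurable]: "1 \<le> j \<Longrightarrow> trunc j \<in> borel_measurable M"
  unfolding trunc_def by measurable

lemma trunc_indep: "M.indep_vars (\<lambda>_. borel) trunc {1..}"
  unfolding trunc_def[abs_def]
  by (rule M.indep_vars_compose2[OF indep, where Y="\<lambda>j y. min y (real j)"]) simp

lemma trunc_bounds: "1 \<le> j \<Longrightarrow> \<omega> \<in> space M \<Longrightarrow> 0 \<le> trunc j \<omega> \<and> trunc j \<omega> \<le> real j"
  using Y_nonneg by (auto simp: trunc_def)

lemma trunc_integrable:
  assumes "1 \<le> j"
  shows "integrable M (trunc j)" "integrable M (\<lambda>\<omega>. (trunc j \<omega>)\<^sup>2)"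
proof -
  show "integrable M (trunc j)"
    using trunc_bounds assms by (intro M.integrable_const_bound[where B="real j"]) auto
  show "integrable M (\<lambda>\<omega>. (trunc j \<omega>)\<^sup>2)"
    using trunc_bounds[OF assms] assms
    by (intro M.integrable_const_bound[where B="(real j)\<^sup>2"]) (auto intro!: power_mono)
qed

lemma integrable_min_sq: "0 \<le> c \<Longrightarrow> integrable N (\<lambda>x. (min (Z x) c)\<^sup>2)"
  by (rule N.integrable_const_bound[where B="c\<^sup>2"]) (auto intro!: power_mono simp: Z_nonneg)

lemma expectation_trunc_le:
  assumes "1 \<le> j"
  shows "M.expectation (trunc j) \<le> (\<integral>x. Z x \<partial>N)"
proof -
  have "ennreal (M.expectation (trunc j)) = (\<integral>\<^sup>+\<omega>. ennreal (min (Y j \<omega>) (real j)) \<partial>M)"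
    using trunc_integrable[OF assms] trunc_bounds[OF assms]
    by (subst nn_integral_eq_integral) (auto simp: trunc_def[abs_def])
  also have "\<dots> \<le> (\<integral>\<^sup>+x. ennreal (min (Z x) (real j)) \<partial>N)"
    using assms Y_nonneg Z_nonneg tail_le
    by (intro nn_integral_min_mono_of_tail_le M.sigma_finite_measure N.sigma_finite_measure) auto
  also have "\<dots> \<le> (\<integral>\<^sup>+x. ennreal (Z x) \<partial>N)"
    by (intro nn_integral_mono ennreal_leI) auto
  also have "\<dots> = ennreal (\<integral>x. Z x \<partial>N)"
    using Z_integrable Z_nonneg by (intro nn_integral_eq_integral) auto
  finally show ?thesis
    using Z_nonneg by (simp add: ennreal_le_iff integral_nonneg_AE)
qed

lemma expectation_trunc_sq_le:
  assumes "1 \<le> j"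
  shows "M.expectation (\<lambda>\<omega>. (trunc j \<omega>)\<^sup>2) \<le> (\<integral>x. (min (Z x) (real j))\<^sup>2 \<partial>N)"
proof -
  have "ennreal (M.expectation (\<lambda>\<omega>. (trunc j \<omega>)\<^sup>2)) = (\<integral>\<^sup>+\<omega>. ennreal ((min (Y j \<omega>) (real j))\<^sup>2) \<partial>M)"
    using trunc_integrable[OF assms] by (subst nn_integral_eq_integral) (auto simp: trunc_def[abs_def])
  also have "\<dots> \<le> (\<integral>\<^sup>+x. ennreal ((min (Z x) (real j))\<^sup>2) \<partial>N)"
    using assms Y_nonneg Z_nonneg tail_le
    by (intro nn_integral_min_sq_mono_of_tail_le M.sigma_finite_measure N.sigma_finite_measure) auto
  also have "\<dots> = ennreal (\<integral>x. (min (Z x) (real j))\<^sup>2 \<partial>N)"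
    using integrable_min_sq[of "real j"] by (intro nn_integral_eq_integral) auto
  finally show ?thesis
    by (simp add: ennreal_le_iff)
qed

lemma summable_truncated_sq_div_geom_floor:
  assumes a: "a > 1"
  shows "summable (\<lambda>m. (\<integral>x. (min (Z x) (real (geom_floor a m)))\<^sup>2 \<partial>N) / real (geom_floor a m))"
proof -
  define g where "g m x = (min (Z x) (real (geom_floor a m)))\<^sup>2 / real (geom_floor a m)" for m x
  have g_integrable: "integrable N (g m)" for m
    unfolding g_def using integrable_min_sq by auto
  have g_nonneg: "0 \<le> g m x" for m x
    by (simp add: g_def)
  have "(\<Sum>m. ennreal (\<integral>x. g m x \<partial>N)) = (\<Sum>m. \<integral>\<^sup>+x. ennreal (g m x) \<partial>N)"
    using g_integrable g_nonneg by (intro suminf_cong nn_integral_eq_integral[symmetric]) auto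
  also have "\<dots> = (\<integral>\<^sup>+x. (\<Sum>m. ennreal (g m x)) \<partial>N)"
    by (rule nn_integral_suminf[symmetric]) (simp add: g_def)
  also have "\<dots> \<le> (\<integral>\<^sup>+x. ennreal (4 * a * Z x / (a - 1)) \<partial>N)"
  proof (intro nn_integral_mono)
    fix x assume "x \<in> space N"
    then have "(\<Sum>m<n. ennreal (g m x)) \<le> ennreal (4 * a * Z x / (a - 1))" for n
      using sum_truncated_sq_div_geom_floor_le[OF a Z_nonneg] by (simp add: g_def ennreal_leI)
    then show "(\<Sum>m. ennreal (g m x)) \<le> ennreal (4 * a * Z x / (a - 1))"
      unfolding suminf_eq_SUP by (intro SUP_least)
  qed
  also have "\<dots> < top"
    using Z_integrable Z_nonneg a by (subst nn_integral_eq_integral) auto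
  finally have "(\<Sum>m. ennreal (\<integral>x. g m x \<partial>N)) \<noteq> top"
    by simp
  then have "summable (\<lambda>m. \<integral>x. g m x \<partial>N)"
    using g_nonneg by (intro summable_suminf_not_top integral_nonneg_AE) auto
  then show ?thesis
    by (simp add: g_def)
qed

lemma AE_eventually_centered_block_sum_less:
  assumes a: "a > 1" and e: "e > 0"
  shows "AE \<omega> in M. eventually (\<lambda>m.
    (\<Sum>j=1..geom_floor a m. trunc j \<omega> - M.expectation (trunc j)) < e * real (geom_floor a m)) sequentially"
proof -
  define k where "k m = geom_floor a m" for m
  define B where "B m = {\<omega>\<in>space M. e * real (k m) \<le> (\<Sum>j=1..k m. trunc j \<omega> - M.expectation (trunc j))}" for m
  have [measurable]: "B m \<in> sets M" for m
    unfolding B_def by measurable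
  have prob_le: "M.prob (B m) \<le> (\<integral>x. (min (Z x) (real (k m)))\<^sup>2 \<partial>N) / real (k m) / e\<^sup>2" for m
  proof -
    have k_pos: "1 \<le> k m"
      using geom_floor_bounds[OF a] by (simp add: k_def)
    have "M.prob (B m) \<le> (\<Sum>j=1..k m. M.expectation (\<lambda>\<omega>. (trunc j \<omega>)\<^sup>2)) / (e * real (k m))\<^sup>2"
      unfolding B_def using k_pos e trunc_integrable
      by (intro M.indep_vars_Chebyshev_sum[OF trunc_indep]) auto
    also have "\<dots> \<le> (\<Sum>j=1..k m. \<integral>x. (min (Z x) (real (k m)))\<^sup>2 \<partial>N) / (e * real (k m))\<^sup>2"
    proof (intro divide_right_mono sum_mono order.trans[OF expectation_trunc_sq_le])
      fix j assume "j \<in> {1..k m}"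
      then show "(\<integral>x. (min (Z x) (real j))\<^sup>2 \<partial>N) \<le> (\<integral>x. (min (Z x) (real (k m)))\<^sup>2 \<partial>N)"
        using integrable_min_sq Z_nonneg by (intro integral_mono) (auto intro!: power_mono)
    qed auto
    also have "\<dots> = (\<integral>x. (min (Z x) (real (k m)))\<^sup>2 \<partial>N) / real (k m) / e\<^sup>2"
      using k_pos e by (simp add: power2_eq_square field_simps)
    finally show ?thesis .
  qed
  have "summable (\<lambda>m. (\<integral>x. (min (Z x) (real (k m)))\<^sup>2 \<partial>N) / real (k m) / e\<^sup>2)"
    unfolding k_def by (intro summable_divide summable_truncated_sq_div_geom_floor a)
  then have "summable (\<lambda>m. M.prob (B m))"
    by (rule summable_comparison_test') (use prob_le in simp)
  then have "AE \<omega> in M. eventually (\<lambda>m. \<omega> \<in> space M - B m) sequentially"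
    by (intro borel_cantelli_AE1) (auto simp: M.emeasure_eq_measure)
  then show ?thesis
    by eventually_elim (auto elim!: eventually_mono simp: B_def k_def)
qed

lemma AE_eventually_trunc_eq: "AE \<omega> in M. eventually (\<lambda>j. Y j \<omega> = trunc j \<omega>) sequentially"
proof -
  define A where "A n = {\<omega>\<in>space M. real (Suc n) < Y (Suc n) \<omega>}" for n
  have [measurable]: "A n \<in> sets M" for n
    unfolding A_def by measurable
  have prob_le: "M.prob (A n) \<le> N.prob {x\<in>space N. real (Suc n) \<le> Z x}" for n
  proof -
    have "emeasure M (A n) \<le> emeasure M {\<omega>\<in>space M. real (Suc n) \<le> Y (Suc n) \<omega>}"
      unfolding A_def by (intro emeasure_mono) auto
    also have "\<dots> \<le> emeasure N {x\<in>space N. real (Suc n) \<le> Z x}"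
      by (intro tail_le) auto
    finally show ?thesis
      by (simp add: M.emeasure_eq_measure N.emeasure_eq_measure)
  qed
  have "summable (\<lambda>n. N.prob {x\<in>space N. real (Suc n) \<le> Z x})"
    using Z_nonneg by (intro N.summable_measure_ge_Suc Z_integrable) auto
  then have "summable (\<lambda>n. M.prob (A n))"
    by (rule summable_comparison_test') (use prob_le in simp)
  then have "AE \<omega> in M. eventually (\<lambda>n. \<omega> \<in> space M - A n) sequentially"
    by (intro borel_cantelli_AE1) (auto simp: M.emeasure_eq_measure)
  then show ?thesis
  proof eventually_elim
    case (elim \<omega>)
    then have "eventually (\<lambda>n. Y (Suc n) \<omega> = trunc (Suc n) \<omega>) sequentially"
      by (rule eventually_mono) (auto simp: A_def trunc_def)
    then show ?case
      using eventually_sequentially_Suc[of "\<lambda>j. Y j \<omega> = trunc j \<omega>"] by simp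
  qed
qed

lemma AE_eventually_average_le:
  assumes a: "a > 1" and e: "e > 0" and d: "d > 0"
  shows "AE \<omega> in M. eventually (\<lambda>n. (\<Sum>j=1..n. Y j \<omega>) / real n \<le> a * ((\<integral>x. Z x \<partial>N) + e) + d) sequentially"
  using AE_eventually_centered_block_sum_less[OF a e] AE_eventually_trunc_eq
    AE_space[of M]
proof eventually_elim
  case (elim \<omega>)
  have "eventually (\<lambda>m. (\<Sum>j=1..geom_floor a m. trunc j \<omega>)
      \<le> real (geom_floor a m) * ((\<integral>x. Z x \<partial>N) + e)) sequentially"
    using elim(1)
  proof eventually_elim
    case (elim m)
    have "(\<Sum>j=1..geom_floor a m. M.expectation (trunc j)) \<le> (\<Sum>j=1..geom_floor a m. \<integral>x. Z x \<partial>N)"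
      by (intro sum_mono expectation_trunc_le) auto
    with elim show ?case
      by (simp add: sum_subtractf algebra_simps)
  qed
  then have "eventually (\<lambda>n. (\<Sum>j=1..n. trunc j \<omega>) \<le> a * ((\<integral>x. Z x \<partial>N) + e) * real n) sequentially"
    using a e Z_nonneg trunc_bounds elim(3)
    by (intro eventually_sum_le_of_geom_floor) (auto intro: integral_nonneg_AE add_nonneg_nonneg)
  then show ?case
    using elim(2) d by (rule eventually_average_le_of_eventually_eq)
qed

lemma AE_limsup_average_le:
  "AE \<omega> in M. limsup (\<lambda>n. ereal ((\<Sum>j=1..n. Y j \<omega>) / real n)) \<le> ereal (\<integral>x. Z x \<partial>N)"
proof -
  define q :: "nat \<Rightarrow> real" where "q r = inverse (real (Suc r))" for r
  define bound where "bound r = (1 + q r) * ((\<integral>x. Z x \<partial>N) + q r) + q r" for r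
  have "AE \<omega> in M. \<forall>r. eventually (\<lambda>n. (\<Sum>j=1..n. Y j \<omega>) / real n \<le> bound r) sequentially"
    unfolding AE_all_countable bound_def q_def by (intro allI AE_eventually_average_le) auto
  then show ?thesis
  proof eventually_elim
    case (elim \<omega>)
    have "bound \<longlonglongrightarrow> (1 + 0) * ((\<integral>x. Z x \<partial>N) + 0) + 0"
      unfolding bound_def q_def by (intro tendsto_intros LIMSEQ_inverse_real_of_nat)
    then have lim: "(\<lambda>r. ereal (bound r)) \<longlonglongrightarrow> ereal (\<integral>x. Z x \<partial>N)"
      by simp
    have "limsup (\<lambda>n. ereal ((\<Sum>j=1..n. Y j \<omega>) / real n)) \<le> ereal (bound r)" for r
      using elim by (intro Limsup_bounded) (auto elim: eventually_mono)
    then show ?case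
      by (intro LIMSEQ_le_const[OF lim]) auto
  qed
qed

end

section \<open>Shift to nonnegative variables\<close>

lemma AE_limsup_average_le_integral_max:
  fixes M :: "'a measure" and N :: "'b measure"
    and Xs :: "nat \<Rightarrow> 'a \<Rightarrow> real" and X :: "'b \<Rightarrow> real"
  assumes "prob_space M" "prob_space N"
    and indep: "prob_space.indep_vars M (\<lambda>_. borel) Xs {1..}"
    and [measurable]: "X \<in> borel_measurable N"
    and int: "integrable N (\<lambda>x. max (X x) c)"
    and tail_le: "\<And>n s. 1 \<le> n \<Longrightarrow>
      measure M {\<omega>\<in>space M. s \<le> Xs n \<omega>} \<le> measure N {x\<in>space N. s < X x}"
  shows "AE \<omega> in M. limsup (\<lambda>n. ereal ((\<Sum>i=1..n. Xs i \<omega>) / real n)) \<le> ereal (\<integral>x. max (X x) c \<partial>N)"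
proof -
  interpret M: prob_space M by fact
  interpret N: prob_space N by fact
  interpret shifted: dominated_indep_seq M N "\<lambda>j \<omega>. max (Xs j \<omega>) c - c" "\<lambda>x. max (X x) c - c"
  proof unfold_locales
    show "M.indep_vars (\<lambda>_. borel) (\<lambda>j \<omega>. max (Xs j \<omega>) c - c) {1..}"
      by (rule M.indep_vars_compose2[OF indep, where Y="\<lambda>_ y. max y c - c"]) simp
    show "integrable N (\<lambda>x. max (X x) c - c)"
      using int by simp
    fix j :: nat and t :: real assume "1 \<le> j" "0 < t"
    then have "{\<omega>\<in>space M. t \<le> max (Xs j \<omega>) c - c} = {\<omega>\<in>space M. t + c \<le> Xs j \<omega>}"
      by (auto simp: max_def)
    then have "M.prob {\<omega>\<in>space M. t \<le> max (Xs j \<omega>) c - c} \<le> N.prob {x\<in>space N. t + c < X x}"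
      using tail_le \<open>1 \<le> j\<close> by simp
    also have "\<dots> \<le> N.prob {x\<in>space N. t \<le> max (X x) c - c}"
      by (intro N.finite_measure_mono) (auto simp: max_def)
    finally show "emeasure M {\<omega>\<in>space M. t \<le> max (Xs j \<omega>) c - c} \<le> emeasure N {x\<in>space N. t \<le> max (X x) c - c}"
      by (simp add: M.emeasure_eq_measure N.emeasure_eq_measure)
  qed auto
  show ?thesis
    using shifted.AE_limsup_average_le
  proof eventually_elim
    case (elim \<omega>)
    have "eventually (\<lambda>n. ereal ((\<Sum>i=1..n. Xs i \<omega>) / real n)
        \<le> ereal ((\<Sum>i=1..n. max (Xs i \<omega>) c - c) / real n) + ereal c) sequentially"
      using eventually_ge_at_top[of 1]
    proof eventually_elim
      case (elim n)
      have "(\<Sum>i=1..n. Xs i \<omega>) \<le> (\<Sum>i=1..n. max (Xs i \<omega>) c - c) + real n * c"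
        by (simp add: sum_subtractf sum_mono)
      with elim show ?case
        by (simp add: field_simps)
    qed
    then have "limsup (\<lambda>n. ereal ((\<Sum>i=1..n. Xs i \<omega>) / real n))
        \<le> limsup (\<lambda>n. ereal ((\<Sum>i=1..n. max (Xs i \<omega>) c - c) / real n)) + ereal c"
      by (subst Limsup_add_ereal_right[symmetric]) (auto intro: Limsup_mono)
    also have "\<dots> \<le> ereal (\<integral>x. max (X x) c - c \<partial>N) + ereal c"
      using elim by (intro add_right_mono)
    also have "\<dots> = ereal (\<integral>x. max (X x) c \<partial>N)"
      using int by (simp add: N.prob_space)
    finally show ?case .
  qed
qed

theorem theorem3p5:
  fixes M :: "'a measure" and N :: "'b measure"
    and Xs :: "nat \<Rightarrow> 'a \<Rightarrow> real" and X :: "'b \<Rightarrow> real"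
  assumes "prob_space M" and "prob_space N"
    and indep: "prob_space.indep_vars M (\<lambda>_. borel) Xs {1..}"
    and X_rv: "X \<in> borel_measurable N"
    and X_pos: "(\<integral>\<^sup>+ x. ennreal (max 0 (X x)) \<partial>N) < \<infinity>"
    and dom: "\<And>n (s::ereal). n \<ge> 1 \<Longrightarrow>
       AE \<omega> in M. cond_prob M (gen_sigma M Xs {1..<n}) {\<omega>\<in>space M. ereal (Xs n \<omega>) \<ge> s} \<omega>
                   \<le> measure N {x\<in>space N. ereal (X x) > s}"
  shows "AE \<omega> in M. limsup (\<lambda>n. ereal ((\<Sum>i=1..n. Xs i \<omega>) / real n)) \<le> ext_expectation N X"
proof -
  interpret M: prob_space M by fact
  interpret N: prob_space N by fact
  have Xs_measurable [measurable]: "1 \<le> i \<Longrightarrow> Xs i \<in> borel_measurable M" for i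
    using indep unfolding M.indep_vars_def by auto
  have tail_le: "measure M {\<omega>\<in>space M. s \<le> Xs n \<omega>} \<le> measure N {x\<in>space N. s < X x}"
    if "1 \<le> n" for n s
  proof -
    have "{\<omega>\<in>space M. ereal (Xs n \<omega>) \<ge> ereal s} \<in> sets M"
      using that by simp
    then have "measure M {\<omega>\<in>space M. ereal (Xs n \<omega>) \<ge> ereal s} \<le> measure N {x\<in>space N. ereal (X x) > ereal s}"
      by (intro measure_le_of_cond_prob_le[OF assms(1) subalgebra_gen_sigma _ dom[OF that]]) auto
    then show ?thesis
      by simp
  qed
  have "AE \<omega> in M. \<forall>k::nat.
      limsup (\<lambda>n. ereal ((\<Sum>i=1..n. Xs i \<omega>) / real n)) \<le> ereal (\<integral>x. max (X x) (- real k) \<partial>N)"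
    unfolding AE_all_countable using X_rv X_pos tail_le
    by (intro allI AE_limsup_average_le_integral_max[OF assms(1,2) indep] N.integrable_max_const) auto
  then show ?thesis
    by eventually_elim
      (rule LIMSEQ_le_const[OF N.tendsto_integral_max_ext_expectation[OF X_rv X_pos]], auto)
qed

end
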